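(* Let $Z_1,\ldots,Z_{n+1}$ be i.i.d. from an arbitrary distribution $\mathcal P$, $V$ a data-dependent score function, $\alpha\in(0,1)$. Fix a finite grid $\mathcal G\subset[0,1]$ containing $0$ and $1$, and for $a\in\mathcal G$ let $S(a)=\frac{1}{n+1}\sum_{i=1}^{n+1}\mathbb 1\{V^{Z_{n+1}}_i\le Q(a;\hat{\mathcal F}^{Z_{n+1}}_i)\}$. Let $\tilde\alpha_1=\min\{a\in\mathcal G:S(a)\ge\alpha\}$, $\tilde\alpha_2=\max\{a\in\mathcal G:S(a)<\alpha\}$, $\alpha_1=S(\tilde\alpha_1)$, $\alpha_2=S(\tilde\alpha_2)$, and let $\tilde\alpha=\tilde\alpha_1$ with probability $\frac{\alpha-\alpha_2}{\alpha_1-\alpha_2}$ and $\tilde\alpha=\tilde\alpha_2$ with probability $\frac{\alpha_1-\alpha}{\alpha_1-\alpha_2}$, using randomization independent of the data. Then $\mathbb P\{V^{Z_{n+1}}_{n+1}\le Q(\tilde\alpha;\hat{\mathcal F}^{Z_{n+1}})\}=\alpha$.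
   Context: Data: $Z_i=(X_i,Y_i)\in\mathbb R^p\times\mathbb R$, $i=1,\ldots,n+1$; $X=\{X_1,\ldots,X_{n+1}\}$ (unordered). A localizer is a function $H(x_1,x_2,X)\in[0,1]$ of $x_1,x_2\in\mathbb R^p$ and of the unordered set $X$, satisfying $H(x,x,X)=1$ for all $x$; $H_{i,j}=H(X_i,X_j,X)$, $p^H_{i,j}=H_{i,j}/\sum_{k=1}^{n+1}H_{i,k}$. A data-dependent score function is a measurable map $V(z,\mathcal Z)\in[0,\infty)$, where $z\in\mathbb R^p\times\mathbb R$ and $\mathcal Z$ is an unordered multiset of $n+1$ points. $V^{Z_{n+1}}_i=V(Z_i,\{Z_1,\ldots,Z_{n+1}\})$, $i=1,\ldots,n+1$; $\hat{\mathcal F}^{Z_{n+1}}_i=\sum_{j=1}^{n+1}p^H_{i,j}\delta_{V^{Z_{n+1}}_j}$ and $\hat{\mathcal F}^{Z_{n+1}}=\sum_{j=1}^np^H_{n+1,j}\delta_{V^{Z_{n+1}}_j}+p^H_{n+1,n+1}\delta_\infty$; $\delta_v$ is the point mass at $v$. For a probability distribution $\mathcal F$ on $\mathbb R\cup\{\infty\}$ and $a\in[0,1]$, $Q(a;\mathcal F)=\inf\{t:\mathbb P_{T\sim\mathcal F}(T\le t)\ge a\}$ (with $Q(0;\mathcal F)=-\infty$). *)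

theory Defs
  imports "HOL-Probability.Probability" "HOL-Library.Multiset"
begin

definition Xms :: "nat \<Rightarrow> (nat \<Rightarrow> 'x \<times> real) \<Rightarrow> 'x multiset" where
  "Xms n z = image_mset (\<lambda>i. fst (z i)) (mset_set {1..n+1})"

definition Zms :: "nat \<Rightarrow> (nat \<Rightarrow> 'x \<times> real) \<Rightarrow> ('x \<times> real) multiset" where
  "Zms n z = image_mset z (mset_set {1..n+1})"

definition Hm :: "('x \<Rightarrow> 'x \<Rightarrow> 'x multiset \<Rightarrow> real) \<Rightarrow> nat \<Rightarrow> (nat \<Rightarrow> 'x \<times> real) \<Rightarrow> nat \<Rightarrow> nat \<Rightarrow> real" where
  "Hm H n z i j = H (fst (z i)) (fst (z j)) (Xms n z)"

definition pH :: "('x \<Rightarrow> 'x \<Rightarrow> 'x multiset \<Rightarrow> real) \<Rightarrow> nat \<Rightarrow> (nat \<Rightarrow> 'x \<times> real) \<Rightarrow> nat \<Rightarrow> nat \<Rightarrow> real" where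
  "pH H n z i j = Hm H n z i j / (\<Sum>k\<in>{1..n+1}. Hm H n z i k)"

definition Vs :: "('x \<times> real \<Rightarrow> ('x \<times> real) multiset \<Rightarrow> real) \<Rightarrow> nat \<Rightarrow> (nat \<Rightarrow> 'x \<times> real) \<Rightarrow> nat \<Rightarrow> real" where
  "Vs V n z i = V (z i) (Zms n z)"

text \<open>Quantile Q(a; F) of the discrete distribution F = sum_{j in I} w_j delta_{v_j} on R \<union> {\<infinity>}:
  Q(a;F) = inf {t : P_{T~F}(T \<le> t) \<ge> a}; for a = 0 this is -\<infinity>.\<close>
definition Qd :: "real \<Rightarrow> ('i \<Rightarrow> real) \<Rightarrow> ('i \<Rightarrow> ereal) \<Rightarrow> 'i set \<Rightarrow> ereal" where
  "Qd a w v I = Inf {t. a \<le> (\<Sum>j\<in>{j\<in>I. v j \<le> t}. w j)}"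

definition QFi where
  "QFi H V n z i a = Qd a (pH H n z i) (\<lambda>j. ereal (Vs V n z j)) {1..n+1}"

definition QF where
  "QF H V n z a = Qd a (pH H n z (n+1))
      (\<lambda>j. if j = n+1 then \<infinity> else ereal (Vs V n z j)) {1..n+1}"

definition Sfun where
  "Sfun H V n z a = real (card {i\<in>{1..n+1}. ereal (Vs V n z i) \<le> QFi H V n z i a}) / real (n+1)"

definition alpha1t where
  "alpha1t H V n G \<alpha> z = Min {a\<in>G. Sfun H V n z a \<ge> \<alpha>}"

definition alpha2t where
  "alpha2t H V n G \<alpha> z = Max {a\<in>G. Sfun H V n z a < \<alpha>}"

definition alpha1 where
  "alpha1 H V n G \<alpha> z = Sfun H V n z (alpha1t H V n G \<alpha> z)"

definition alpha2 where
  "alpha2 H V n G \<alpha> z = Sfun H V n z (alpha2t H V n G \<alpha> z)"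

text \<open>Randomized level: with u uniform on [0,1] independent of the data, pick
  alpha1t with probability (\<alpha> - alpha2)/(alpha1 - alpha2), else alpha2t.\<close>
definition alphat where
  "alphat H V n G \<alpha> z u =
     (if u < (\<alpha> - alpha2 H V n G \<alpha> z) / (alpha1 H V n G \<alpha> z - alpha2 H V n G \<alpha> z)
      then alpha1t H V n G \<alpha> z else alpha2t H V n G \<alpha> z)"

end

theory Submission
  imports Defs
begin

text \<open>Write \<open>T\<^sub>i\<close> (\<open>lower_mass\<close> below) for the \<open>\<hat>F\<^sub>i\<close>-mass of the scores strictly below \<open>V\<^sub>i\<close>. Then
  \<open>V\<^sub>i \<le> Q(a; \<hat>F\<^sub>i) \<longleftrightarrow> T\<^sub>i < a\<close>, and the same holds for the test point with \<open>\<hat>F\<close>, because the atom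
  at \<open>\<infinity>\<close> never lies below \<open>V\<^sub>n\<^sub>+\<^sub>1\<close>. Hence \<open>S(a)\<close> is the fraction of indices \<open>i\<close> with \<open>T\<^sub>i < a\<close>.
  The random level \<open>\<tilde>\<alpha>\<close> depends on the data only through the curve \<open>S\<close>, which is invariant under
  permutations of \<open>Z\<^sub>1, \<dots>, Z\<^sub>n\<^sub>+\<^sub>1\<close>; by exchangeability the test point is therefore covered with
  probability \<open>\<bbbE> S(\<tilde>\<alpha>)\<close>. Finally, for fixed data the randomisation between \<open>\<tilde>\<alpha>\<^sub>1\<close> and \<open>\<tilde>\<alpha>\<^sub>2\<close> is
  calibrated exactly so that \<open>\<bbbE>\<^sub>u S(\<tilde>\<alpha>) = \<alpha>\<close>.\<close>

lemma ereal_le_Qd_iff: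
  fixes w :: "'i \<Rightarrow> real"
  assumes I: "finite I" and w: "\<And>j. j \<in> I \<Longrightarrow> 0 \<le> w j"
  shows "ereal x \<le> Qd a w v I \<longleftrightarrow> (\<Sum>j\<in>{j\<in>I. v j < ereal x}. w j) < a"
proof
  assume h: "ereal x \<le> Qd a w v I"
  show "(\<Sum>j\<in>{j\<in>I. v j < ereal x}. w j) < a"
  proof (rule ccontr)
    assume "\<not> ?thesis"
    hence ge: "a \<le> (\<Sum>j\<in>{j\<in>I. v j < ereal x}. w j)" by simp
    \<comment> \<open>the largest atom below \<open>x\<close> is already a point where the distribution function reaches \<open>a\<close>\<close>
    define t where "t = Max (insert (-\<infinity>) (v ` {j\<in>I. v j < ereal x}))"
    have fin: "finite (insert (-\<infinity>) (v ` {j\<in>I. v j < ereal x}))" using I by auto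
    have t_less: "t < ereal x" unfolding t_def using fin by (subst Max_less_iff) auto
    have "{j\<in>I. v j \<le> t} = {j\<in>I. v j < ereal x}"
      using t_less fin unfolding t_def by (auto intro: Max_ge order.strict_trans1)
    hence "Qd a w v I \<le> t" unfolding Qd_def using ge by (intro Inf_lower) simp
    thus False using h t_less by simp
  qed
next
  assume h: "(\<Sum>j\<in>{j\<in>I. v j < ereal x}. w j) < a"
  show "ereal x \<le> Qd a w v I" unfolding Qd_def
  proof (rule Inf_greatest)
    fix t assume "t \<in> {t. a \<le> (\<Sum>j\<in>{j\<in>I. v j \<le> t}. w j)}"
    hence t: "a \<le> (\<Sum>j\<in>{j\<in>I. v j \<le> t}. w j)" by simp
    show "ereal x \<le> t"
    proof (rule ccontr)
      assume "\<not> ?thesis"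
      hence "{j\<in>I. v j \<le> t} \<subseteq> {j\<in>I. v j < ereal x}" by auto
      hence "(\<Sum>j\<in>{j\<in>I. v j \<le> t}. w j) \<le> (\<Sum>j\<in>{j\<in>I. v j < ereal x}. w j)"
        using I w by (intro sum_mono2) auto
      thus False using t h by simp
    qed
  qed
qed

lemma Min_filter_eq_Min_image:
  fixes c :: "'a :: linorder"
  assumes "finite A" "a \<in> A" "P a" "\<And>x. x \<in> A \<Longrightarrow> x \<le> c"
  shows "Min {x\<in>A. P x} = Min ((\<lambda>x. if P x then x else c) ` A)"
proof (rule antisym)
  have fin: "finite {x\<in>A. P x}" "{x\<in>A. P x} \<noteq> {}" using assms by auto
  have "Min {x\<in>A. P x} \<le> a" using fin(1) assms(2,3) by (intro Min_le) auto
  also have "a \<le> c" by (rule assms(4)[OF assms(2)])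
  finally have Min_le_c: "Min {x\<in>A. P x} \<le> c" .
  have "Min {x\<in>A. P x} \<le> (if P x then x else c)" if "x \<in> A" for x
    using Min_le_c fin(1) that by (auto intro: Min_le)
  thus "Min {x\<in>A. P x} \<le> Min ((\<lambda>x. if P x then x else c) ` A)"
    using assms(1,2) Min_le_c by (subst Min_ge_iff) auto
  have "Min {x\<in>A. P x} \<in> (\<lambda>x. if P x then x else c) ` A"
    using Min_in[OF fin] by (auto intro: rev_image_eqI)
  thus "Min ((\<lambda>x. if P x then x else c) ` A) \<le> Min {x\<in>A. P x}"
    using assms(1) by (intro Min_le) auto
qed

lemma Max_filter_eq_Max_image:
  fixes c :: "'a :: linorder"
  assumes "finite A" "a \<in> A" "P a" "\<And>x. x \<in> A \<Longrightarrow> c \<le> x"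
  shows "Max {x\<in>A. P x} = Max ((\<lambda>x. if P x then x else c) ` A)"
proof (rule antisym)
  have fin: "finite {x\<in>A. P x}" "{x\<in>A. P x} \<noteq> {}" using assms by auto
  have "c \<le> a" by (rule assms(4)[OF assms(2)])
  also have "a \<le> Max {x\<in>A. P x}" using fin(1) assms(2,3) by (intro Max_ge) auto
  finally have c_le_Max: "c \<le> Max {x\<in>A. P x}" .
  have "(if P x then x else c) \<le> Max {x\<in>A. P x}" if "x \<in> A" for x
    using c_le_Max fin(1) that by (auto intro: Max_ge)
  thus "Max ((\<lambda>x. if P x then x else c) ` A) \<le> Max {x\<in>A. P x}"
    using assms(1,2) c_le_Max by (subst Max_le_iff) auto
  have "Max {x\<in>A. P x} \<in> (\<lambda>x. if P x then x else c) ` A"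
    using Max_in[OF fin] by (auto intro: rev_image_eqI)
  thus "Max {x\<in>A. P x} \<le> Max ((\<lambda>x. if P x then x else c) ` A)"
    using assms(1) by (intro Max_ge) auto
qed

lemma nn_integral_randomized_choice:
  fixes a\<^sub>1 a\<^sub>2 \<alpha> :: real
  assumes "0 \<le> a\<^sub>2" "a\<^sub>2 < \<alpha>" "\<alpha> \<le> a\<^sub>1"
  shows "(\<integral>\<^sup>+u. ennreal (if u < (\<alpha> - a\<^sub>2) / (a\<^sub>1 - a\<^sub>2) then a\<^sub>1 else a\<^sub>2)
      \<partial>uniform_measure lborel {0..1}) = ennreal \<alpha>"
proof -
  define p where "p = (\<alpha> - a\<^sub>2) / (a\<^sub>1 - a\<^sub>2)"
  let ?W = "uniform_measure lborel {0..1::real}"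
  interpret W: prob_space ?W by (intro prob_space_uniform_measure) auto
  have p: "0 < p" "p \<le> 1" "a\<^sub>2 + (a\<^sub>1 - a\<^sub>2) * p = \<alpha>"
    unfolding p_def using assms by (auto simp: field_simps)
  have "emeasure ?W {..<p} = ennreal p"
  proof -
    have "{0..1} \<inter> {..<p} = {0..<p}" using p by auto
    thus ?thesis using p by (simp add: emeasure_lborel_Ico divide_ennreal_def)
  qed
  have "(\<integral>\<^sup>+u. ennreal (if u < p then a\<^sub>1 else a\<^sub>2) \<partial>?W)
      = (\<integral>\<^sup>+u. ennreal a\<^sub>2 + ennreal (a\<^sub>1 - a\<^sub>2) * indicator {..<p} u \<partial>?W)"
    using assms by (intro nn_integral_cong)
      (auto simp: indicator_def ennreal_plus[symmetric] simp del: ennreal_plus)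
  also have "\<dots> = ennreal a\<^sub>2 + ennreal (a\<^sub>1 - a\<^sub>2) * ennreal p"
    using \<open>emeasure ?W {..<p} = ennreal p\<close>
    by (subst nn_integral_add) (auto simp: nn_integral_cmult_indicator W.emeasure_space_1)
  also have "\<dots> = ennreal \<alpha>"
    using assms p by (simp add: ennreal_mult[symmetric] ennreal_plus[symmetric] del: ennreal_plus)
  finally show ?thesis unfolding p_def .
qed

lemma emeasure_PiM_permute:
  assumes P: "prob_space P" and \<sigma>: "bij_betw \<sigma> I I" and A: "A \<in> sets (PiM I (\<lambda>_. P))"
  shows "emeasure (PiM I (\<lambda>_. P)) {z \<in> space (PiM I (\<lambda>_. P)). (\<lambda>j\<in>I. z (\<sigma> j)) \<in> A}
    = emeasure (PiM I (\<lambda>_. P)) A"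
proof -
  let ?N = "PiM I (\<lambda>_. P)"
  have "(\<lambda>z. \<lambda>j\<in>I. z (\<sigma> j)) \<in> measurable ?N ?N"
    using \<sigma> by (intro measurable_restrict measurable_component_singleton) (auto simp: bij_betw_def)
  moreover have "distr ?N ?N (\<lambda>z. \<lambda>j\<in>I. z (\<sigma> j)) = ?N"
    using distr_PiM_reindex[of I "\<lambda>_. P" \<sigma> I] P \<sigma> by (auto simp: bij_betw_def)
  ultimately show ?thesis
    using emeasure_distr[OF _ A, of "\<lambda>z. \<lambda>j\<in>I. z (\<sigma> j)" ?N] by (simp add: Int_def conj_commute)
qed

lemma image_mset_mset_set_permute:
  assumes "bij_betw \<sigma> I I" "\<And>j. j \<in> I \<Longrightarrow> g j = f (\<sigma> j)"
  shows "image_mset g (mset_set I) = image_mset f (mset_set I)"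
proof -
  have "image_mset g (mset_set I) = image_mset f (image_mset \<sigma> (mset_set I))"
    using assms(2) by (cases "finite I") (auto simp: multiset.map_comp intro!: image_mset_cong)
  also have "image_mset \<sigma> (mset_set I) = mset_set I"
    using assms(1) by (simp add: image_mset_mset_set bij_betw_def)
  finally show ?thesis .
qed

definition lower_mass ::
    "('x \<Rightarrow> 'x \<Rightarrow> 'x multiset \<Rightarrow> real) \<Rightarrow> ('x \<times> real \<Rightarrow> ('x \<times> real) multiset \<Rightarrow> real) \<Rightarrow>
      nat \<Rightarrow> (nat \<Rightarrow> 'x \<times> real) \<Rightarrow> nat \<Rightarrow> real" where
  "lower_mass H V n z i = (\<Sum>j\<in>{1..n+1}. if Vs V n z j < Vs V n z i then pH H n z i j else 0)"

lemma lower_mass_permute: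
  assumes \<sigma>: "bij_betw \<sigma> {1..n+1} {1..n+1}" and z': "\<And>j. j \<in> {1..n+1} \<Longrightarrow> z' j = z (\<sigma> j)"
    and i: "i \<in> {1..n+1}"
  shows "lower_mass H V n z' i = lower_mass H V n z (\<sigma> i)"
proof -
  have Zms: "Zms n z' = Zms n z"
    unfolding Zms_def using z' by (intro image_mset_mset_set_permute[OF \<sigma>]) auto
  have Xms: "Xms n z' = Xms n z"
    unfolding Xms_def using z' by (intro image_mset_mset_set_permute[OF \<sigma>]) auto
  have Vs: "Vs V n z' j = Vs V n z (\<sigma> j)" if "j \<in> {1..n+1}" for j
    unfolding Vs_def Zms z'[OF that] ..
  have Hm: "Hm H n z' j k = Hm H n z (\<sigma> j) (\<sigma> k)" if "j \<in> {1..n+1}" "k \<in> {1..n+1}" for j k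
    unfolding Hm_def Xms z'[OF that(1)] z'[OF that(2)] ..
  have "(\<Sum>k\<in>{1..n+1}. Hm H n z' i k) = (\<Sum>k\<in>{1..n+1}. Hm H n z (\<sigma> i) (\<sigma> k))"
    using Hm i by (intro sum.cong) auto
  also have "\<dots> = (\<Sum>k\<in>{1..n+1}. Hm H n z (\<sigma> i) k)"
    by (rule sum.reindex_bij_betw[OF \<sigma>])
  finally have pH: "pH H n z' i j = pH H n z (\<sigma> i) (\<sigma> j)" if "j \<in> {1..n+1}" for j
    unfolding pH_def using Hm[OF i that] by simp
  have "lower_mass H V n z' i
      = (\<Sum>j\<in>{1..n+1}. if Vs V n z (\<sigma> j) < Vs V n z (\<sigma> i) then pH H n z (\<sigma> i) (\<sigma> j) else 0)"
    unfolding lower_mass_def using Vs pH i by (intro sum.cong) auto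
  also have "\<dots> = lower_mass H V n z (\<sigma> i)"
    unfolding lower_mass_def by (rule sum.reindex_bij_betw[OF \<sigma>])
  finally show ?thesis .
qed

lemma lower_mass_measurable:
  assumes "\<And>i j. i \<in> {1..n+1} \<Longrightarrow> j \<in> {1..n+1} \<Longrightarrow> (\<lambda>z. Hm H n z i j) \<in> borel_measurable K"
    and "\<And>i. i \<in> {1..n+1} \<Longrightarrow> (\<lambda>z. Vs V n z i) \<in> borel_measurable K" and "i \<in> {1..n+1}"
  shows "(\<lambda>z. lower_mass H V n z i) \<in> borel_measurable K"
  unfolding lower_mass_def pH_def using assms
  by (intro borel_measurable_divide borel_measurable_sum measurable_If borel_measurable_less) auto

lemma alphat_Sfun_cong:
  "Sfun H V n z' = Sfun H V n z \<Longrightarrow> alphat H V n G \<alpha> z' u = alphat H V n G \<alpha> z u"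
  unfolding alphat_def alpha1_def alpha2_def alpha1t_def alpha2t_def by simp

context
  fixes H :: "'x \<Rightarrow> 'x \<Rightarrow> 'x multiset \<Rightarrow> real"
  assumes H_nonneg: "\<And>x y X. 0 \<le> H x y X"
begin

lemma pH_nonneg: "0 \<le> pH H n z i j"
  unfolding pH_def Hm_def using H_nonneg by (intro divide_nonneg_nonneg sum_nonneg) auto

lemma lower_mass_nonneg: "0 \<le> lower_mass H V n z i"
  unfolding lower_mass_def using pH_nonneg by (intro sum_nonneg) auto

lemma lower_mass_less_1:
  assumes H_diag: "\<And>x X. H x x X = 1" and i: "i \<in> {1..n+1}"
  shows "lower_mass H V n z i < 1"
proof -
  define D where "D = (\<Sum>k\<in>{1..n+1}. Hm H n z i k)"
  define R where "R = (\<Sum>k\<in>{1..n+1}-{i}. Hm H n z i k)"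
  have D: "D = 1 + R"
    unfolding D_def R_def using i H_diag by (subst sum.remove) (auto simp: Hm_def)
  have R: "0 \<le> R" unfolding R_def Hm_def using H_nonneg by (intro sum_nonneg) auto
  have "(\<Sum>j\<in>{1..n+1}. if Vs V n z j < Vs V n z i then Hm H n z i j else 0)
      = (\<Sum>j\<in>{1..n+1}-{i}. if Vs V n z j < Vs V n z i then Hm H n z i j else 0)"
    by (subst sum.remove[OF _ i]) auto
  also have "\<dots> \<le> R"
    unfolding R_def using H_nonneg by (intro sum_mono) (auto simp: Hm_def)
  finally have num: "(\<Sum>j\<in>{1..n+1}. if Vs V n z j < Vs V n z i then Hm H n z i j else 0) \<le> R" .
  have "lower_mass H V n z i
      = (\<Sum>j\<in>{1..n+1}. if Vs V n z j < Vs V n z i then Hm H n z i j else 0) / D"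
    unfolding lower_mass_def pH_def D_def[symmetric] sum_divide_distrib by (intro sum.cong) auto
  also have "\<dots> \<le> R / D" using num D R by (simp add: divide_right_mono)
  also have "\<dots> < 1" using D R by simp
  finally show ?thesis .
qed

lemma Vs_le_QFi_iff: "ereal (Vs V n z i) \<le> QFi H V n z i a \<longleftrightarrow> lower_mass H V n z i < a"
proof -
  have "(\<Sum>j\<in>{j\<in>{1..n+1}. ereal (Vs V n z j) < ereal (Vs V n z i)}. pH H n z i j)
      = lower_mass H V n z i"
    unfolding lower_mass_def by (subst sum.inter_filter) auto
  thus ?thesis unfolding QFi_def using pH_nonneg by (subst ereal_le_Qd_iff) auto
qed

lemma Vs_le_QF_iff: "ereal (Vs V n z (n+1)) \<le> QF H V n z a \<longleftrightarrow> lower_mass H V n z (n+1) < a"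
proof -
  have "{j\<in>{1..n+1}. (if j = n+1 then \<infinity> else ereal (Vs V n z j)) < ereal (Vs V n z (n+1))}
      = {j\<in>{1..n+1}. Vs V n z j < Vs V n z (n+1)}" by auto
  moreover have "(\<Sum>j\<in>{j\<in>{1..n+1}. Vs V n z j < Vs V n z (n+1)}. pH H n z (n+1) j)
      = lower_mass H V n z (n+1)"
    unfolding lower_mass_def by (subst sum.inter_filter) auto
  ultimately show ?thesis unfolding QF_def using pH_nonneg by (subst ereal_le_Qd_iff) auto
qed

lemma Sfun_eq_sum:
  "Sfun H V n z a = (\<Sum>i\<in>{1..n+1}. if lower_mass H V n z i < a then 1 else 0) / real (n+1)"
  unfolding Sfun_def Vs_le_QFi_iff by (subst sum.If_cases) (auto intro!: arg_cong[where f=card])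

lemma Sfun_nonneg: "0 \<le> Sfun H V n z a"
  unfolding Sfun_eq_sum by (intro divide_nonneg_nonneg sum_nonneg) auto

lemma Sfun_0: "Sfun H V n z 0 = 0"
  unfolding Sfun_eq_sum using lower_mass_nonneg by (simp add: not_less sum.neutral del: One_nat_def)

lemma Sfun_1:
  assumes "\<And>x X. H x x X = 1"
  shows "Sfun H V n z 1 = 1"
  unfolding Sfun_eq_sum using lower_mass_less_1[OF assms] by simp

lemma Sfun_permute:
  assumes \<sigma>: "bij_betw \<sigma> {1..n+1} {1..n+1}" and "\<And>j. j \<in> {1..n+1} \<Longrightarrow> z' j = z (\<sigma> j)"
  shows "Sfun H V n z' = Sfun H V n z"
proof
  fix a
  have "(\<Sum>i\<in>{1..n+1}. if lower_mass H V n z' i < a then 1 else 0)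
      = (\<Sum>i\<in>{1..n+1}. if lower_mass H V n z (\<sigma> i) < a then 1 else (0::real))"
    using lower_mass_permute[where \<sigma>=\<sigma> and z'=z' and z=z, OF \<sigma> assms(2)] by (intro sum.cong) auto
  also have "\<dots> = (\<Sum>i\<in>{1..n+1}. if lower_mass H V n z i < a then 1 else 0)"
    by (rule sum.reindex_bij_betw[OF \<sigma>])
  finally show "Sfun H V n z' a = Sfun H V n z a"
    unfolding Sfun_eq_sum by simp
qed

lemma Vs_le_QF_alphat_iff:
  "ereal (Vs V n z (n+1)) \<le> QF H V n z (alphat H V n G \<alpha> z u)
    \<longleftrightarrow> lower_mass H V n (restrict z {1..n+1}) (n+1) < alphat H V n G \<alpha> (restrict z {1..n+1}) u"
proof -
  have "lower_mass H V n (restrict z {1..n+1}) (n+1) = lower_mass H V n z (n+1)"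
    using lower_mass_permute[OF bij_betw_id, where z'="restrict z {1..n+1}" and z=z and i="n+1"]
    by simp
  moreover have "alphat H V n G \<alpha> (restrict z {1..n+1}) u = alphat H V n G \<alpha> z u"
    by (rule alphat_Sfun_cong, rule Sfun_permute[OF bij_betw_id]) simp
  ultimately show ?thesis unfolding Vs_le_QF_iff by simp
qed

lemma Sfun_measurable:
  assumes "\<And>i. i \<in> {1..n+1} \<Longrightarrow> (\<lambda>k. lower_mass H V n (zf k) i) \<in> borel_measurable K"
    and "b \<in> borel_measurable K"
  shows "(\<lambda>k. Sfun H V n (zf k) (b k)) \<in> borel_measurable K"
  unfolding Sfun_eq_sum using assms
  by (intro borel_measurable_divide borel_measurable_sum measurable_If borel_measurable_less) auto

lemma emeasure_lower_mass_below_exchange: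
  fixes V :: "'x \<times> real \<Rightarrow> ('x \<times> real) multiset \<Rightarrow> real" and n :: nat
    and P :: "('x \<times> real) measure" and b :: "(nat \<Rightarrow> 'x \<times> real) \<Rightarrow> real"
  defines "N \<equiv> PiM {1..n+1} (\<lambda>_. P)"
  assumes P: "prob_space P"
    and T_meas: "\<And>i. i \<in> {1..n+1} \<Longrightarrow> (\<lambda>z. lower_mass H V n z i) \<in> borel_measurable N"
    and b_meas: "b \<in> borel_measurable N"
    and b_Sfun: "\<And>z z'. Sfun H V n z' = Sfun H V n z \<Longrightarrow> b z' = b z"
    and i: "i \<in> {1..n+1}"
  shows "emeasure N {z \<in> space N. lower_mass H V n z (n+1) < b z}
    = emeasure N {z \<in> space N. lower_mass H V n z i < b z}"
proof -
  define \<sigma> where "\<sigma> = Transposition.transpose i (n+1)"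
  define r where "r z = (\<lambda>j\<in>{1..n+1}. z (\<sigma> j))" for z :: "nat \<Rightarrow> 'x \<times> real"
  have \<sigma>: "bij_betw \<sigma> {1..n+1} {1..n+1}"
    unfolding \<sigma>_def using i by (intro bij_betw_transpose_iff) auto
  have r_lower_mass: "lower_mass H V n (r z) (n+1) = lower_mass H V n z i" for z
    using lower_mass_permute[OF \<sigma>, where z'="r z" and z=z and i="n+1"] by (simp add: r_def \<sigma>_def)
  have r_b: "b (r z) = b z" for z
    by (rule b_Sfun, rule Sfun_permute[OF \<sigma>]) (simp add: r_def)
  have r_space: "r z \<in> space N" if "z \<in> space N" for z
    using that \<sigma> unfolding N_def r_def by (auto simp: space_PiM bij_betw_def)
  have T_last: "(\<lambda>z. lower_mass H V n z (n+1)) \<in> borel_measurable N" by (rule T_meas) simp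
  have A: "{z \<in> space N. lower_mass H V n z (n+1) < b z} \<in> sets N"
    using T_last b_meas by measurable
  have "emeasure N {z \<in> space N. lower_mass H V n z i < b z}
      = emeasure N {z \<in> space N. r z \<in> {z \<in> space N. lower_mass H V n z (n+1) < b z}}"
    using r_space by (auto simp: r_lower_mass[simplified] r_b intro!: arg_cong[where f="emeasure N"])
  also have "\<dots> = emeasure N {z \<in> space N. lower_mass H V n z (n+1) < b z}"
    unfolding r_def N_def by (rule emeasure_PiM_permute[OF P \<sigma> A[unfolded N_def]])
  finally show ?thesis ..
qed

lemma emeasure_lower_mass_below_Sfun:
  fixes V :: "'x \<times> real \<Rightarrow> ('x \<times> real) multiset \<Rightarrow> real" and n :: nat
    and P :: "('x \<times> real) measure" and b :: "(nat \<Rightarrow> 'x \<times> real) \<Rightarrow> real"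
  defines "N \<equiv> PiM {1..n+1} (\<lambda>_. P)"
  assumes P: "prob_space P"
    and T_meas: "\<And>i. i \<in> {1..n+1} \<Longrightarrow> (\<lambda>z. lower_mass H V n z i) \<in> borel_measurable N"
    and b_meas: "b \<in> borel_measurable N"
    and b_Sfun: "\<And>z z'. Sfun H V n z' = Sfun H V n z \<Longrightarrow> b z' = b z"
  shows "emeasure N {z \<in> space N. lower_mass H V n z (n+1) < b z}
    = (\<integral>\<^sup>+z. ennreal (Sfun H V n z (b z)) \<partial>N)"
proof -
  define A where "A i = {z \<in> space N. lower_mass H V n z i < b z}" for i
  have A: "A i \<in> sets N" if "i \<in> {1..n+1}" for i
    unfolding A_def using T_meas[OF that] b_meas by measurable
  have count: "(\<Sum>i\<in>{1..n+1}. indicator (A i) z) = of_nat (n+1) * ennreal (Sfun H V n z (b z))"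
    if "z \<in> space N" for z
  proof -
    have "(\<Sum>i\<in>{1..n+1}. indicator (A i) z)
        = (\<Sum>i\<in>{1..n+1}. ennreal (if lower_mass H V n z i < b z then 1 else 0))"
      unfolding A_def indicator_def using that by (intro sum.cong) auto
    also have "\<dots> = ennreal (\<Sum>i\<in>{1..n+1}. if lower_mass H V n z i < b z then 1 else 0)"
      by (rule sum_ennreal) simp
    also have "\<dots> = ennreal (real (n+1) * Sfun H V n z (b z))"
      unfolding Sfun_eq_sum by simp
    finally show ?thesis
      by (simp add: ennreal_mult' ennreal_of_nat_eq_real_of_nat del: of_nat_Suc)
  qed
  have "of_nat (n+1) * emeasure N (A (n+1)) = (\<Sum>i\<in>{1..n+1}. emeasure N (A (n+1)))"
    by simp
  also have "\<dots> = (\<Sum>i\<in>{1..n+1}. emeasure N (A i))"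
    unfolding A_def N_def
    using emeasure_lower_mass_below_exchange[OF P T_meas[unfolded N_def] b_meas[unfolded N_def] b_Sfun]
    by (intro sum.cong) auto
  also have "\<dots> = (\<integral>\<^sup>+z. (\<Sum>i\<in>{1..n+1}. indicator (A i) z) \<partial>N)"
    using A by (subst nn_integral_sum) (auto simp: nn_integral_indicator)
  also have "\<dots> = (\<integral>\<^sup>+z. of_nat (n+1) * ennreal (Sfun H V n z (b z)) \<partial>N)"
    using count by (rule nn_integral_cong)
  also have "\<dots> = of_nat (n+1) * (\<integral>\<^sup>+z. ennreal (Sfun H V n z (b z)) \<partial>N)"
    using Sfun_measurable[OF T_meas b_meas] by (intro nn_integral_cmult) simp
  finally have "of_nat (n+1) * emeasure N (A (n+1))
      = of_nat (n+1) * (\<integral>\<^sup>+z. ennreal (Sfun H V n z (b z)) \<partial>N)" .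
  hence "emeasure N (A (n+1)) = (\<integral>\<^sup>+z. ennreal (Sfun H V n z (b z)) \<partial>N)"
    by (simp add: ennreal_mult_cancel_left del: of_nat_Suc)
  thus ?thesis unfolding A_def .
qed

end

context
  fixes H :: "'x \<Rightarrow> 'x \<Rightarrow> 'x multiset \<Rightarrow> real" and V :: "'x \<times> real \<Rightarrow> ('x \<times> real) multiset \<Rightarrow> real"
    and n :: nat and G :: "real set" and \<alpha> :: real
  assumes H_nonneg: "\<And>x y X. 0 \<le> H x y X" and H_diag: "\<And>x X. H x x X = 1"
    and alpha: "0 < \<alpha>" "\<alpha> < 1"
    and G: "finite G" "G \<subseteq> {0..1}" "0 \<in> G" "1 \<in> G"
begin

lemma alpha1t_mem: "alpha1t H V n G \<alpha> z \<in> {a\<in>G. \<alpha> \<le> Sfun H V n z a}"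
  unfolding alpha1t_def using G Sfun_1[where H=H, OF H_nonneg H_diag] alpha by (intro Min_in) auto

lemma alpha2t_mem: "alpha2t H V n G \<alpha> z \<in> {a\<in>G. Sfun H V n z a < \<alpha>}"
  unfolding alpha2t_def using G Sfun_0[where H=H, OF H_nonneg] alpha by (intro Max_in) auto

lemma Sfun_alphat:
  "Sfun H V n z (alphat H V n G \<alpha> z u)
    = (if u < (\<alpha> - alpha2 H V n G \<alpha> z) / (alpha1 H V n G \<alpha> z - alpha2 H V n G \<alpha> z)
       then alpha1 H V n G \<alpha> z else alpha2 H V n G \<alpha> z)"
  unfolding alphat_def alpha1_def alpha2_def by simp

lemma nn_integral_Sfun_alphat:
  "(\<integral>\<^sup>+u. ennreal (Sfun H V n z (alphat H V n G \<alpha> z u)) \<partial>uniform_measure lborel {0..1}) = ennreal \<alpha>"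
  unfolding Sfun_alphat using alpha1t_mem[of z] alpha2t_mem[of z] Sfun_nonneg[where H=H, OF H_nonneg]
  by (intro nn_integral_randomized_choice) (auto simp: alpha1_def alpha2_def)

lemma alphat_measurable:
  assumes T_meas: "\<And>i. i \<in> {1..n+1} \<Longrightarrow> (\<lambda>k. lower_mass H V n (zf k) i) \<in> borel_measurable K"
    and "uf \<in> borel_measurable K"
  shows "(\<lambda>k. alphat H V n G \<alpha> (zf k) (uf k)) \<in> borel_measurable K"
proof -
  have S_meas: "(\<lambda>k. Sfun H V n (zf k) (b k)) \<in> borel_measurable K"
    if "b \<in> borel_measurable K" for b
    using T_meas that by (intro Sfun_measurable[where H=H, OF H_nonneg])
  \<comment> \<open>rewriting the extrema over filtered sets as extrema over all of \<open>G\<close> exposes their measurability\<close>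
  have S_const: "(\<lambda>k. Sfun H V n (zf k) a) \<in> borel_measurable K" for a
    using S_meas[of "\<lambda>_. a"] by simp
  have alpha1t_Min: "alpha1t H V n G \<alpha> z = Min ((\<lambda>a. if \<alpha> \<le> Sfun H V n z a then a else 1) ` G)" for z
    unfolding alpha1t_def using G Sfun_1[where H=H, OF H_nonneg H_diag] alpha
    by (intro Min_filter_eq_Min_image[of _ 1]) auto
  have m1: "(\<lambda>k. alpha1t H V n G \<alpha> (zf k)) \<in> borel_measurable K"
    unfolding alpha1t_Min using G(1) S_const by measurable
  have alpha2t_Max: "alpha2t H V n G \<alpha> z = Max ((\<lambda>a. if Sfun H V n z a < \<alpha> then a else 0) ` G)" for z
    unfolding alpha2t_def using G Sfun_0[where H=H, OF H_nonneg] alpha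
    by (intro Max_filter_eq_Max_image[of _ 0]) auto
  have m2: "(\<lambda>k. alpha2t H V n G \<alpha> (zf k)) \<in> borel_measurable K"
    unfolding alpha2t_Max using G(1) S_const by measurable
  have a1: "(\<lambda>k. alpha1 H V n G \<alpha> (zf k)) \<in> borel_measurable K"
    unfolding alpha1_def by (rule S_meas[OF m1])
  have a2: "(\<lambda>k. alpha2 H V n G \<alpha> (zf k)) \<in> borel_measurable K"
    unfolding alpha2_def by (rule S_meas[OF m2])
  show ?thesis
    unfolding alphat_def using m1 m2 a1 a2 assms(2)
    by (intro measurable_If borel_measurable_less borel_measurable_divide borel_measurable_diff) auto
qed

lemma alphat_pair_measurable:
  assumes T_meas: "\<And>i. i \<in> {1..n+1} \<Longrightarrow> (\<lambda>z. lower_mass H V n z i) \<in> borel_measurable N"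
    and W: "sets W = sets borel"
  shows "(\<lambda>x. alphat H V n G \<alpha> (fst x) (snd x)) \<in> borel_measurable (N \<Otimes>\<^sub>M W)"
proof (rule alphat_measurable)
  show "(\<lambda>x. lower_mass H V n (fst x) i) \<in> borel_measurable (N \<Otimes>\<^sub>M W)" if "i \<in> {1..n+1}" for i
    using T_meas that by measurable
  show "snd \<in> borel_measurable (N \<Otimes>\<^sub>M W)"
    using measurable_snd[of N W] measurable_cong_sets[OF refl W, of "N \<Otimes>\<^sub>M W"] by simp
qed

lemma lower_mass_below_alphat_sets:
  assumes T_meas: "\<And>i. i \<in> {1..n+1} \<Longrightarrow> (\<lambda>z. lower_mass H V n z i) \<in> borel_measurable N"
    and W: "sets W = sets borel"
  shows "{x \<in> space (N \<Otimes>\<^sub>M W). lower_mass H V n (fst x) (n+1) < alphat H V n G \<alpha> (fst x) (snd x)}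
    \<in> sets (N \<Otimes>\<^sub>M W)"
proof -
  have "(\<lambda>z. lower_mass H V n z (n+1)) \<in> borel_measurable N" by (rule T_meas) simp
  with alphat_pair_measurable[OF T_meas W] show ?thesis by measurable
qed

lemma measure_lower_mass_below_alphat:
  fixes P :: "('x \<times> real) measure"
  defines "N \<equiv> PiM {1..n+1} (\<lambda>_. P)" and "W \<equiv> uniform_measure lborel {0..1::real}"
  assumes P: "prob_space P"
    and T_meas: "\<And>i. i \<in> {1..n+1} \<Longrightarrow> (\<lambda>z. lower_mass H V n z i) \<in> borel_measurable N"
  shows "measure (N \<Otimes>\<^sub>M W)
      {x \<in> space (N \<Otimes>\<^sub>M W). lower_mass H V n (fst x) (n+1) < alphat H V n G \<alpha> (fst x) (snd x)}
    = \<alpha>"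
    (is "measure _ ?E = _")
proof -
  have sets_W: "sets W = sets borel" unfolding W_def by simp
  interpret N: prob_space N unfolding N_def by (rule prob_space_PiM) (rule P)
  interpret W: prob_space W unfolding W_def by (rule prob_space_uniform_measure) auto
  interpret NW: pair_sigma_finite N W by unfold_locales
  have T_last: "(\<lambda>z. lower_mass H V n z (n+1)) \<in> borel_measurable N" by (rule T_meas) simp
  have a_meas: "(\<lambda>x. alphat H V n G \<alpha> (fst x) (snd x)) \<in> borel_measurable (N \<Otimes>\<^sub>M W)"
    using T_meas sets_W by (rule alphat_pair_measurable)
  have slice: "(\<integral>\<^sup>+z. indicator ?E (z, u) \<partial>N) = (\<integral>\<^sup>+z. ennreal (Sfun H V n z (alphat H V n G \<alpha> z u)) \<partial>N)"
    for u
  proof -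
    define A where "A = {z \<in> space N. lower_mass H V n z (n+1) < alphat H V n G \<alpha> z u}"
    have a_u: "(\<lambda>z. alphat H V n G \<alpha> z u) \<in> borel_measurable N"
      by (rule alphat_measurable[OF T_meas]) auto
    have "(\<integral>\<^sup>+z. indicator ?E (z, u) \<partial>N) = (\<integral>\<^sup>+z. indicator A z \<partial>N)"
      by (intro nn_integral_cong) (auto simp: A_def W_def space_pair_measure indicator_def)
    also have "\<dots> = emeasure N A"
      unfolding A_def using T_last a_u by (intro nn_integral_indicator) measurable
    also have "\<dots> = (\<integral>\<^sup>+z. ennreal (Sfun H V n z (alphat H V n G \<alpha> z u)) \<partial>N)"
      unfolding A_def N_def
      by (rule emeasure_lower_mass_below_Sfun[where H=H, OF H_nonneg P T_meas[unfolded N_def]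
            a_u[unfolded N_def] alphat_Sfun_cong])
    finally show ?thesis .
  qed
  have "?E \<in> sets (N \<Otimes>\<^sub>M W)" using T_meas sets_W by (rule lower_mass_below_alphat_sets)
  hence "emeasure (N \<Otimes>\<^sub>M W) ?E = (\<integral>\<^sup>+u. (\<integral>\<^sup>+z. indicator ?E (z, u) \<partial>N) \<partial>W)"
    by (simp add: NW.nn_integral_snd)
  also have "\<dots> = (\<integral>\<^sup>+z. (\<integral>\<^sup>+u. ennreal (Sfun H V n z (alphat H V n G \<alpha> z u)) \<partial>W) \<partial>N)"
  proof -
    have "(\<lambda>x. lower_mass H V n (fst x) i) \<in> borel_measurable (N \<Otimes>\<^sub>M W)" if "i \<in> {1..n+1}" for i
      using T_meas that by measurable
    hence "(\<lambda>x. Sfun H V n (fst x) (alphat H V n G \<alpha> (fst x) (snd x))) \<in> borel_measurable (N \<Otimes>\<^sub>M W)"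
      by (rule Sfun_measurable[where H=H, OF H_nonneg _ a_meas])
    from NW.Fubini[OF measurable_compose[OF this measurable_ennreal]]
    show ?thesis unfolding slice by simp
  qed
  also have "\<dots> = (\<integral>\<^sup>+z. ennreal \<alpha> \<partial>N)"
    unfolding W_def by (simp only: nn_integral_Sfun_alphat)
  also have "\<dots> = ennreal \<alpha>"
    by (simp add: N.emeasure_space_1)
  finally show ?thesis using alpha by (simp add: measure_def)
qed

end

theorem theorem4:
  fixes M :: "'w measure"
    and P :: "((real ^ 'p) \<times> real) measure"
    and Z :: "nat \<Rightarrow> 'w \<Rightarrow> (real ^ 'p) \<times> real"
    and U :: "'w \<Rightarrow> real"
    and H :: "real ^ 'p \<Rightarrow> real ^ 'p \<Rightarrow> (real ^ 'p) multiset \<Rightarrow> real"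
    and V :: "(real ^ 'p) \<times> real \<Rightarrow> ((real ^ 'p) \<times> real) multiset \<Rightarrow> real"
    and n :: nat and G :: "real set" and \<alpha> :: real
  assumes M: "prob_space M"
    and Z_meas: "\<And>i. i \<in> {1..n+1} \<Longrightarrow> Z i \<in> measurable M borel"
    and P: "prob_space P" "sets P = sets borel"
    and U_meas: "U \<in> borel_measurable M"
    and joint_law: "distr M (PiM {1..n+1} (\<lambda>_. borel) \<Otimes>\<^sub>M lborel)
          (\<lambda>w. (\<lambda>i\<in>{1..n+1}. Z i w, U w))
        = PiM {1..n+1} (\<lambda>_. P) \<Otimes>\<^sub>M uniform_measure lborel {0..1}"
    and H_range: "\<And>x y X. 0 \<le> H x y X \<and> H x y X \<le> 1"
    and H_diag: "\<And>x X. H x x X = 1"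
    and H_meas: "\<And>i j. i \<in> {1..n+1} \<Longrightarrow> j \<in> {1..n+1} \<Longrightarrow>
        (\<lambda>z. Hm H n z i j) \<in> borel_measurable (PiM {1..n+1} (\<lambda>_. borel))"
    and V_nonneg: "\<And>z Zs. 0 \<le> V z Zs"
    and V_meas: "\<And>i. i \<in> {1..n+1} \<Longrightarrow>
        (\<lambda>z. Vs V n z i) \<in> borel_measurable (PiM {1..n+1} (\<lambda>_. borel))"
    and alpha: "0 < \<alpha>" "\<alpha> < 1"
    and G: "finite G" "G \<subseteq> {0..1}" "0 \<in> G" "1 \<in> G"
  shows "prob_space.prob M
     {w \<in> space M. ereal (Vs V n (\<lambda>i. Z i w) (n+1))
         \<le> QF H V n (\<lambda>i. Z i w) (alphat H V n G \<alpha> (\<lambda>i. Z i w) (U w))} = \<alpha>"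
proof -
  have H_nonneg: "\<And>x y X. 0 \<le> H x y X" using H_range by blast
  define B where "B = PiM {1..n+1} (\<lambda>_. borel :: ((real ^ 'p) \<times> real) measure)"
  define N where "N = PiM {1..n+1} (\<lambda>_. P)"
  define W where "W = uniform_measure lborel {0..1::real}"
  define f where "f = (\<lambda>w. (\<lambda>i\<in>{1..n+1}. Z i w, U w))"
  define E where "E = {x \<in> space (N \<Otimes>\<^sub>M W).
    lower_mass H V n (fst x) (n+1) < alphat H V n G \<alpha> (fst x) (snd x)}"
  have sets_N: "sets N = sets B" unfolding N_def B_def by (rule sets_PiM_cong) (auto simp: P(2))
  have sets_W: "sets W = sets borel" unfolding W_def by simp
  have sets_NW: "sets (N \<Otimes>\<^sub>M W) = sets (B \<Otimes>\<^sub>M lborel)"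
    by (rule sets_pair_measure_cong) (simp_all add: sets_N sets_W)
  have T_meas: "(\<lambda>z. lower_mass H V n z i) \<in> borel_measurable N" if "i \<in> {1..n+1}" for i
    unfolding measurable_cong_sets[OF sets_N refl] B_def
    using H_meas V_meas that by (intro lower_mass_measurable)
  have f_meas: "f \<in> measurable M (B \<Otimes>\<^sub>M lborel)"
    unfolding f_def B_def using Z_meas U_meas by (intro measurable_Pair measurable_restrict) auto
  have E_sets: "E \<in> sets (B \<Otimes>\<^sub>M lborel)"
    unfolding E_def sets_NW[symmetric] using T_meas sets_W
    by (rule lower_mass_below_alphat_sets[OF H_nonneg H_diag alpha G])
  have "{w \<in> space M. ereal (Vs V n (\<lambda>i. Z i w) (n+1))
         \<le> QF H V n (\<lambda>i. Z i w) (alphat H V n G \<alpha> (\<lambda>i. Z i w) (U w))} = f -` E \<inter> space M"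
    using measurable_space[OF f_meas] sets_eq_imp_space_eq[OF sets_NW]
    unfolding E_def Vs_le_QF_alphat_iff[OF H_nonneg] by (auto simp: f_def)
  hence "prob_space.prob M {w \<in> space M. ereal (Vs V n (\<lambda>i. Z i w) (n+1))
         \<le> QF H V n (\<lambda>i. Z i w) (alphat H V n G \<alpha> (\<lambda>i. Z i w) (U w))}
      = measure (distr M (B \<Otimes>\<^sub>M lborel) f) E"
    using measure_distr[OF f_meas E_sets] by simp
  also have "distr M (B \<Otimes>\<^sub>M lborel) f = N \<Otimes>\<^sub>M W"
    using joint_law unfolding f_def B_def N_def W_def .
  also have "measure (N \<Otimes>\<^sub>M W) E = \<alpha>"
    unfolding E_def N_def W_def using T_meas[unfolded N_def]
    by (intro measure_lower_mass_below_alphat[OF H_nonneg H_diag alpha G P(1)])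
  finally show ?thesis .
qed

end
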